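(* For every $\epsilon>0$ there is $L_0>\pi\sqrt2$ such that for all $L>L_0$, $b_L(L/2)<2+\epsilon$.
   Context: For $\alpha\in(0,1/\sqrt2)$ let $L_\alpha=\pi/\mathrm{AGM}(\alpha,\tfrac12\sqrt{1+2\alpha^2})$ (arithmetic–geometric mean); $\alpha\mapsto L_\alpha$ is a decreasing bijection from $(0,1/\sqrt2)$ onto $(\pi\sqrt2,\infty)$. For $L>\pi\sqrt2$ let $\alpha$ satisfy $L_\alpha=L$ and let $x_0>y_0>0$ satisfy $x_0^2+y_0^2=1$, $x_0y_0=\alpha^2$. Let $(x_L,y_L,z_L)(t)$ solve $x'=-xz$, $y'=yz$, $z'=x^2-y^2$ ($'=d/dt$) with initial value $(x_0,y_0,0)$, and let $a_L,b_L$ solve $a'=2x_L+az_L$, $b'=2y_L-bz_L$ with $a_L(0)=b_L(0)=0$. *)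

theory Defs
  imports "HOL-Analysis.Analysis"
begin

fun agm_seq :: "real \<Rightarrow> real \<Rightarrow> nat \<Rightarrow> real \<times> real" where
  "agm_seq a b 0 = (a, b)"
| "agm_seq a b (Suc n) =
     (let (p, q) = agm_seq a b n in ((p + q) / 2, sqrt (p * q)))"

definition AGM :: "real \<Rightarrow> real \<Rightarrow> real" where
  "AGM a b = lim (\<lambda>n. fst (agm_seq a b n))"

definition L_alpha :: "real \<Rightarrow> real" where
  "L_alpha \<alpha> = pi / AGM \<alpha> (sqrt (1 + 2 * \<alpha>\<^sup>2) / 2)"

definition ode_solution ::
  "real \<Rightarrow> real \<Rightarrow> (real \<Rightarrow> real) \<Rightarrow> (real \<Rightarrow> real) \<Rightarrow> (real \<Rightarrow> real)
     \<Rightarrow> (real \<Rightarrow> real) \<Rightarrow> (real \<Rightarrow> real) \<Rightarrow> bool" where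
  "ode_solution x0 y0 x y z a b \<longleftrightarrow>
     x 0 = x0 \<and> y 0 = y0 \<and> z 0 = 0 \<and> a 0 = 0 \<and> b 0 = 0 \<and>
     (\<forall>t. (x has_real_derivative (- x t * z t)) (at t)) \<and>
     (\<forall>t. (y has_real_derivative (y t * z t)) (at t)) \<and>
     (\<forall>t. (z has_real_derivative ((x t)\<^sup>2 - (y t)\<^sup>2)) (at t)) \<and>
     (\<forall>t. (a has_real_derivative (2 * x t + a t * z t)) (at t)) \<and>
     (\<forall>t. (b has_real_derivative (2 * y t - b t * z t)) (at t))"

end

theory Submission
  imports Defs "HOL-Real_Asymp.Real_Asymp"
begin

text \<open>Along a solution, x y and x^2 + y^2 + z^2 are conserved, and as long as
  D = x x0 - y y0 stays positive the coordinate u = x0 y0 z / D moves with speed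
  sqrt ((u^2 + x0^2) (u^2 + y0^2)). Hence D first vanishes, at the point where (x, y) = (y0, x0),
  exactly at time I(x0, y0) = int_0^oo du / sqrt ((u^2 + x0^2) (u^2 + y0^2)), and by Gauss's
  argument (invariance of I under the arithmetic-geometric mean step) this time is
  pi / (2 AGM(x0, y0)) = L/2. Up to that time H(u) - b y is nondecreasing, where
  H(v) = 2 x0 + 2 (y0 v - x0^2) / sqrt (v^2 + x0^2) < 2 x0 + 2 y0, so b(L/2) <= 2 + 2 y0 / x0.
  Finally I(x0, y0) <= I(y0, y0) = pi / (2 y0) gives y0 <= pi / L, and x0 > 1/2, so
  b(L/2) < 2 + 4 pi / L.\<close>

lemma DERIV_le_imp_increment_le:
  fixes f g :: "real \<Rightarrow> real"
  assumes "a \<le> b"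
    and f: "\<And>t. a \<le> t \<Longrightarrow> t \<le> b \<Longrightarrow> (f has_real_derivative f' t) (at t)"
    and g: "\<And>t. a \<le> t \<Longrightarrow> t \<le> b \<Longrightarrow> (g has_real_derivative g' t) (at t)"
    and le: "\<And>t. a \<le> t \<Longrightarrow> t \<le> b \<Longrightarrow> f' t \<le> g' t"
  shows "f b - f a \<le> g b - g a"
proof -
  have "(\<lambda>t. g t - f t) a \<le> (\<lambda>t. g t - f t) b"
  proof (rule DERIV_nonneg_imp_nondecreasing[OF \<open>a \<le> b\<close>])
    fix t assume "a \<le> t" "t \<le> b"
    then show "\<exists>y. ((\<lambda>t. g t - f t) has_real_derivative y) (at t) \<and> 0 \<le> y"
      using f g le by (intro exI[of _ "g' t - f' t"] conjI DERIV_diff) auto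
  qed
  then show ?thesis by simp
qed

lemma DERIV_zero_imp_eq:
  fixes f :: "real \<Rightarrow> real"
  assumes "\<And>t. min a b \<le> t \<Longrightarrow> t \<le> max a b \<Longrightarrow> (f has_real_derivative 0) (at t)"
  shows "f a = f b"
proof -
  have "f (max a b) - f (min a b) \<le> 0" "0 \<le> f (max a b) - f (min a b)"
    using DERIV_le_imp_increment_le[of "min a b" "max a b" f "\<lambda>_. 0" "\<lambda>_. 0" "\<lambda>_. 0"]
      DERIV_le_imp_increment_le[of "min a b" "max a b" "\<lambda>_. 0" "\<lambda>_. 0" f "\<lambda>_. 0"] assms
    by auto
  then show ?thesis by (cases "a \<le> b") (auto simp: min_def max_def)
qed

lemma isCont_le_from_left:
  fixes f :: "real \<Rightarrow> real"
  assumes "isCont f T" "a < T" "\<And>t. a \<le> t \<Longrightarrow> t < T \<Longrightarrow> f t \<le> K"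
  shows "f T \<le> K"
proof (rule tendsto_upperbound)
  show "(f \<longlongrightarrow> f T) (at_left T)" using assms(1) by (simp add: isCont_def filterlim_at_split)
  show "\<forall>\<^sub>F t in at_left T. f t \<le> K"
    using eventually_at_left_real[OF assms(2)] by eventually_elim (use assms(3) in auto)
qed simp

lemma first_zero:
  fixes f :: "real \<Rightarrow> real"
  assumes cont: "\<And>t. isCont f t" and "0 < f a" "a \<le> c" "f c \<le> 0"
  obtains T where "a < T" "T \<le> c" "f T = 0" "\<And>t. a \<le> t \<Longrightarrow> t < T \<Longrightarrow> 0 < f t"
proof -
  define S where "S = {a..c} \<inter> {t. f t \<le> 0}"
  have "continuous_on UNIV f" using cont by (simp add: continuous_at_imp_continuous_on)
  then have "closed S" unfolding S_def by (intro closed_Int closed_atLeastAtMost closed_Collect_le) auto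
  moreover have "c \<in> S" "bdd_below S" using assms by (auto simp: S_def intro: bdd_belowI[of _ a])
  ultimately have "Inf S \<in> S" by (intro closed_contains_Inf) auto
  then have "a \<le> Inf S" "Inf S \<le> c" "f (Inf S) \<le> 0" by (simp_all add: S_def)
  have before: "0 < f t" if "a \<le> t" "t < Inf S" for t
  proof (rule ccontr)
    assume "\<not> 0 < f t"
    with that \<open>Inf S \<le> c\<close> have "t \<in> S" by (simp add: S_def)
    then have "Inf S \<le> t" using \<open>bdd_below S\<close> by (rule cInf_lower)
    with that show False by simp
  qed
  have "a < Inf S" using \<open>a \<le> Inf S\<close> \<open>f (Inf S) \<le> 0\<close> \<open>0 < f a\<close> by (cases "Inf S = a") auto
  have "- f t \<le> 0" if "a \<le> t" "t < Inf S" for t using before[OF that] by simp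
  then have "- f (Inf S) \<le> 0"
    by (rule isCont_le_from_left[where f = "\<lambda>t. - f t", OF isCont_minus[OF cont] \<open>a < Inf S\<close>])
  with \<open>f (Inf S) \<le> 0\<close> have "f (Inf S) = 0" by simp
  show ?thesis using \<open>a < Inf S\<close> \<open>Inf S \<le> c\<close> \<open>f (Inf S) = 0\<close> before by (rule that)
qed

section \<open>The arithmetic-geometric mean\<close>

lemma agm_seq_Suc_shift: "agm_seq a b (Suc n) = agm_seq ((a + b) / 2) (sqrt (a * b)) n"
  by (induction n) (auto simp: Let_def split: prod.splits)

lemma agm_seq_Suc_swap: "agm_seq b a (Suc n) = agm_seq a b (Suc n)"
  by (simp only: agm_seq_Suc_shift) (simp add: add.commute mult.commute)

lemma agm_step_bounds:
  fixes p q :: real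
  assumes "0 \<le> q" "q \<le> p"
  shows "q \<le> sqrt (p * q)" "sqrt (p * q) \<le> (p + q) / 2" "(p + q) / 2 \<le> p"
proof -
  have "q\<^sup>2 \<le> p * q" using assms by (simp add: power2_eq_square mult_right_mono)
  then show "q \<le> sqrt (p * q)" by (rule real_le_rsqrt)
  show "sqrt (p * q) \<le> (p + q) / 2" using assms by (intro arith_geo_mean_sqrt) auto
  show "(p + q) / 2 \<le> p" using assms by simp
qed

lemma agm_seq_bounds:
  assumes "0 \<le> b" "b \<le> a"
  shows "b \<le> snd (agm_seq a b n) \<and> snd (agm_seq a b n) \<le> fst (agm_seq a b n)
           \<and> fst (agm_seq a b n) \<le> a"
proof (induction n)
  case (Suc n)
  obtain p q where pq: "agm_seq a b n = (p, q)" by fastforce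
  with Suc have "b \<le> q" "q \<le> p" "p \<le> a" by auto
  with assms agm_step_bounds[of q p] show ?case by (auto simp: pq Let_def)
qed (use assms in simp)

lemma agm_seq_tendsto_AGM:
  assumes "0 \<le> b" "b \<le> a"
  shows "(\<lambda>n. fst (agm_seq a b n)) \<longlonglongrightarrow> AGM a b" "(\<lambda>n. snd (agm_seq a b n)) \<longlonglongrightarrow> AGM a b"
    "b \<le> AGM a b"
proof -
  define P Q where "P = (\<lambda>n. fst (agm_seq a b n))" and "Q = (\<lambda>n. snd (agm_seq a b n))"
  have bounds: "b \<le> Q n" "Q n \<le> P n" "P n \<le> a" for n
    using agm_seq_bounds[OF assms, of n] by (auto simp: P_def Q_def)
  have step: "P (Suc n) = (P n + Q n) / 2" "Q (Suc n) = sqrt (P n * Q n)" for n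
    by (cases "agm_seq a b n"; simp add: P_def Q_def Let_def)+
  have "0 \<le> Q n" for n using assms(1) bounds(1) by (rule order_trans)
  then have mono: "Q n \<le> Q (Suc n)" "P (Suc n) \<le> P n" for n
    using agm_step_bounds[OF _ bounds(2), of n] by (simp_all add: step)
  have "incseq Q" by (rule incseq_SucI) (rule mono(1))
  have "decseq P" by (rule decseq_SucI) (rule mono(2))
  have "Q n \<le> a" "b \<le> P n" for n using bounds order_trans by metis+
  then obtain MQ MP where MQ: "Q \<longlonglongrightarrow> MQ" "\<And>n. Q n \<le> MQ" and MP: "P \<longlonglongrightarrow> MP"
    using incseq_convergent[OF \<open>incseq Q\<close>] decseq_convergent[OF \<open>decseq P\<close>] by metis
  have "(\<lambda>n. P (Suc n)) \<longlonglongrightarrow> MP" using MP by (rule LIMSEQ_Suc)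
  moreover have "(\<lambda>n. P (Suc n)) \<longlonglongrightarrow> (MP + MQ) / 2"
    unfolding step using MP MQ by (auto intro!: tendsto_intros)
  ultimately have "MP = (MP + MQ) / 2" by (rule LIMSEQ_unique)
  moreover have "AGM a b = MP" unfolding AGM_def P_def[symmetric] using MP by (rule limI)
  moreover have "b \<le> MQ" using bounds(1) MQ(2) order_trans by blast
  ultimately show "P \<longlonglongrightarrow> AGM a b" "Q \<longlonglongrightarrow> AGM a b" "b \<le> AGM a b"
    using MP MQ(1) by simp_all
qed

lemma AGM_step:
  assumes "0 \<le> b" "b \<le> a"
  shows "AGM (sqrt (a * b)) ((a + b) / 2) = AGM a b"
proof -
  have "agm_seq (sqrt (a * b)) ((a + b) / 2) (Suc n) = agm_seq a b (Suc (Suc n))" for n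
    by (simp only: agm_seq_Suc_swap agm_seq_Suc_shift[of a b "Suc n"])
  moreover have "(\<lambda>n. fst (agm_seq a b (Suc (Suc n)))) \<longlonglongrightarrow> AGM a b"
    using agm_seq_tendsto_AGM(1)[OF assms] by (intro LIMSEQ_Suc)
  ultimately have "(\<lambda>n. fst (agm_seq (sqrt (a * b)) ((a + b) / 2) (Suc n))) \<longlonglongrightarrow> AGM a b"
    by simp
  then show ?thesis
    unfolding AGM_def by (intro limI) (rule LIMSEQ_imp_Suc)
qed

section \<open>The complete elliptic integral and Gauss's transformation\<close>

definition ell_integrand :: "real \<Rightarrow> real \<Rightarrow> real \<Rightarrow> real" where
  "ell_integrand a b t = 1 / sqrt ((t\<^sup>2 + a\<^sup>2) * (t\<^sup>2 + b\<^sup>2))"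

text \<open>The signed integral of the integrand over [0, u]; the base point -1 makes it differentiable
  at u = 0, where the orbit starts.\<close>
definition ell_partial :: "real \<Rightarrow> real \<Rightarrow> real \<Rightarrow> real" where
  "ell_partial a b u = integral {-1..u} (ell_integrand a b) - integral {-1..0} (ell_integrand a b)"

definition ell_complete :: "real \<Rightarrow> real \<Rightarrow> real" where
  "ell_complete a b = Sup (ell_partial a b ` {0..})"

lemma ell_integrand_pos:
  assumes "0 < a" "0 < b"
  shows "0 < ell_integrand a b t"
proof -
  have "0 < t\<^sup>2 + a\<^sup>2" "0 < t\<^sup>2 + b\<^sup>2" using assms by (simp_all add: add_nonneg_pos)
  then show ?thesis unfolding ell_integrand_def by simp
qed

lemma continuous_on_ell_integrand: "0 < a \<Longrightarrow> 0 < b \<Longrightarrow> continuous_on S (ell_integrand a b)"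
  unfolding ell_integrand_def by (intro continuous_intros) (auto simp: add_pos_nonneg)

lemma ell_integrand_diag: "0 < c \<Longrightarrow> ell_integrand c c t = 1 / (t\<^sup>2 + c\<^sup>2)"
  by (simp add: ell_integrand_def real_sqrt_mult_self)

lemma ell_integrand_antimono:
  assumes "0 < a" "0 < b" "a \<le> a'" "b \<le> b'"
  shows "ell_integrand a' b' t \<le> ell_integrand a b t"
proof -
  have "(t\<^sup>2 + a\<^sup>2) * (t\<^sup>2 + b\<^sup>2) \<le> (t\<^sup>2 + a'\<^sup>2) * (t\<^sup>2 + b'\<^sup>2)"
    using assms by (intro mult_mono add_left_mono power_mono) auto
  moreover have "0 < (t\<^sup>2 + a\<^sup>2) * (t\<^sup>2 + b\<^sup>2)" using assms by (simp add: add_nonneg_pos)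
  ultimately show ?thesis
    unfolding ell_integrand_def by (intro frac_le real_sqrt_le_mono) auto
qed

lemma ell_partial_0 [simp]: "ell_partial a b 0 = 0"
  by (simp add: ell_partial_def)

lemma has_real_derivative_ell_partial:
  assumes "0 < a" "0 < b" "-1 < u"
  shows "(ell_partial a b has_real_derivative ell_integrand a b u) (at u)"
proof -
  have "((\<lambda>v. integral {-1..v} (ell_integrand a b)) has_real_derivative ell_integrand a b u)
      (at u within {-1..u+1})"
    using assms by (intro integral_has_real_derivative continuous_on_ell_integrand) auto
  then have "((\<lambda>v. integral {-1..v} (ell_integrand a b)) has_real_derivative ell_integrand a b u) (at u)"
    using assms by (simp add: at_within_Icc_at)
  then have "((\<lambda>v. integral {-1..v} (ell_integrand a b) - integral {-1..0} (ell_integrand a b))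
      has_real_derivative ell_integrand a b u - 0) (at u)"
    by (intro DERIV_diff DERIV_const)
  then show ?thesis unfolding ell_partial_def[abs_def] by simp
qed

lemma ell_partial_strict_mono:
  assumes "0 < a" "0 < b" "0 \<le> u" "u < v"
  shows "ell_partial a b u < ell_partial a b v"
  using \<open>u < v\<close>
proof (rule DERIV_pos_imp_increasing)
  fix t assume "u \<le> t" "t \<le> v"
  then show "\<exists>y. (ell_partial a b has_real_derivative y) (at t) \<and> 0 < y"
    using assms
    by (intro exI[of _ "ell_integrand a b t"] conjI has_real_derivative_ell_partial ell_integrand_pos) auto
qed

lemma ell_partial_mono:
  "0 < a \<Longrightarrow> 0 < b \<Longrightarrow> 0 \<le> u \<Longrightarrow> u \<le> v \<Longrightarrow> ell_partial a b u \<le> ell_partial a b v"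
  using ell_partial_strict_mono[of a b u v] by (cases "u = v") auto

lemma has_real_derivative_arctan_scaled:
  assumes "0 < c"
  shows "((\<lambda>u. arctan (u / c) / c) has_real_derivative 1 / (u\<^sup>2 + c\<^sup>2)) (at u)"
proof -
  have "((\<lambda>u. u / c) has_real_derivative 1 / c) (at u)"
    using DERIV_cdivide[OF DERIV_ident, of c] by simp
  then have "((\<lambda>u. arctan (u / c) / c) has_real_derivative inverse (1 + (u / c)\<^sup>2) * (1 / c) / c) (at u)"
    by (rule DERIV_cdivide[OF DERIV_chain2[OF DERIV_arctan]])
  moreover have "(1 + (u / c)\<^sup>2) * c * c = u\<^sup>2 + c\<^sup>2"
    using assms by (simp add: field_simps power2_eq_square)
  then have "inverse (1 + (u / c)\<^sup>2) * (1 / c) / c = 1 / (u\<^sup>2 + c\<^sup>2)"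
    by (metis divide_divide_eq_left divide_inverse mult_1)
  ultimately show ?thesis by simp
qed

lemma ell_partial_diag:
  assumes "0 < c" "0 \<le> u"
  shows "ell_partial c c u = arctan (u / c) / c"
proof -
  define h where "h v = ell_partial c c v - arctan (v / c) / c" for v
  have "h u = h 0"
  proof (rule DERIV_zero_imp_eq[where f = h])
    fix t assume "min u 0 \<le> t" "t \<le> max u 0"
    then have "(h has_real_derivative ell_integrand c c t - 1 / (t\<^sup>2 + c\<^sup>2)) (at t)"
      unfolding h_def[abs_def] using assms
      by (intro DERIV_diff has_real_derivative_ell_partial has_real_derivative_arctan_scaled) auto
    then show "(h has_real_derivative 0) (at t)" using assms by (simp add: ell_integrand_diag)
  qed
  then show ?thesis by (simp add: h_def)
qed

lemma ell_partial_antimono: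
  assumes "0 < a" "0 < b" "a \<le> a'" "b \<le> b'" "0 \<le> u"
  shows "ell_partial a' b' u \<le> ell_partial a b u"
  using DERIV_le_imp_increment_le[OF \<open>0 \<le> u\<close> has_real_derivative_ell_partial
      has_real_derivative_ell_partial ell_integrand_antimono, of a' b' a b] assms
  by auto

lemma ell_partial_le:
  assumes "0 < a" "0 < b" "0 \<le> u"
  shows "ell_partial a b u \<le> pi / (2 * min a b)"
proof -
  let ?c = "min a b"
  have "ell_partial a b u \<le> ell_partial ?c ?c u"
    using assms by (intro ell_partial_antimono) auto
  also have "\<dots> = arctan (u / ?c) / ?c" using assms by (simp add: ell_partial_diag)
  also have "\<dots> \<le> (pi / 2) / ?c"
    using assms arctan_ubound[of "u / ?c"] by (intro divide_right_mono) auto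
  finally show ?thesis by simp
qed

lemma bdd_above_ell_partial: "0 < a \<Longrightarrow> 0 < b \<Longrightarrow> bdd_above (ell_partial a b ` {0..})"
  using ell_partial_le[of a b] by (intro bdd_aboveI[where M = "pi / (2 * min a b)"]) auto

lemma ell_partial_le_complete:
  "0 < a \<Longrightarrow> 0 < b \<Longrightarrow> 0 \<le> u \<Longrightarrow> ell_partial a b u \<le> ell_complete a b"
  unfolding ell_complete_def by (intro cSup_upper bdd_above_ell_partial) auto

lemma ell_partial_less_complete:
  assumes "0 < a" "0 < b" "0 \<le> u"
  shows "ell_partial a b u < ell_complete a b"
  using ell_partial_strict_mono[OF assms, of "u + 1"] ell_partial_le_complete[OF assms(1,2), of "u + 1"] assms
  by simp

lemma ell_partial_tendsto_complete:
  assumes "0 < a" "0 < b"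
  shows "(ell_partial a b \<longlongrightarrow> ell_complete a b) at_top"
proof (rule increasing_tendsto)
  show "\<forall>\<^sub>F u in at_top. ell_partial a b u \<le> ell_complete a b"
    using eventually_ge_at_top[of 0] by eventually_elim (use assms ell_partial_le_complete in auto)
  fix l assume "l < ell_complete a b"
  then obtain u where u: "0 \<le> u" "l < ell_partial a b u"
    unfolding ell_complete_def using less_cSup_iff[OF _ bdd_above_ell_partial[OF assms]] by auto
  show "\<forall>\<^sub>F v in at_top. l < ell_partial a b v"
    using eventually_ge_at_top[of u] by eventually_elim (use u assms ell_partial_mono in force)
qed

lemma ell_complete_diag:
  assumes "0 < c"
  shows "ell_complete c c = pi / (2 * c)"
proof -
  have "filterlim (\<lambda>u. u / c) at_top at_top" using assms by real_asymp
  then have "((\<lambda>u. arctan (u / c) / c) \<longlongrightarrow> (pi / 2) / c) at_top"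
    by (intro tendsto_divide tendsto_const filterlim_compose[OF tendsto_arctan_at_top]) (use assms in auto)
  moreover have "\<forall>\<^sub>F u in at_top. arctan (u / c) / c = ell_partial c c u"
    using eventually_ge_at_top[of 0] by eventually_elim (use assms ell_partial_diag in auto)
  ultimately have "(ell_partial c c \<longlongrightarrow> (pi / 2) / c) at_top"
    by (rule Lim_transform_eventually)
  then show ?thesis
    using tendsto_unique[OF _ ell_partial_tendsto_complete[OF assms assms]] by simp
qed

lemma ell_complete_antimono:
  assumes "0 < a" "0 < b" "a \<le> a'" "b \<le> b'"
  shows "ell_complete a' b' \<le> ell_complete a b"
proof (rule tendsto_le[OF _ ell_partial_tendsto_complete ell_partial_tendsto_complete])
  show "\<forall>\<^sub>F u in at_top. ell_partial a' b' u \<le> ell_partial a b u"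
    using eventually_ge_at_top[of 0] by eventually_elim (use assms ell_partial_antimono in auto)
qed (use assms in auto)

lemma ell_integrand_inversion:
  assumes "0 < a" "0 < b" "0 < s"
  shows "ell_integrand a b (a * b / s) * (a * b / s\<^sup>2) = ell_integrand a b s"
proof -
  have "((a * b / s)\<^sup>2 + a\<^sup>2) * ((a * b / s)\<^sup>2 + b\<^sup>2) = (a * b / s\<^sup>2)\<^sup>2 * ((s\<^sup>2 + a\<^sup>2) * (s\<^sup>2 + b\<^sup>2))"
    using assms by (simp add: field_simps power2_eq_square)
  then have "sqrt (((a * b / s)\<^sup>2 + a\<^sup>2) * ((a * b / s)\<^sup>2 + b\<^sup>2))
      = (a * b / s\<^sup>2) * sqrt ((s\<^sup>2 + a\<^sup>2) * (s\<^sup>2 + b\<^sup>2))"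
    using assms by (simp add: real_sqrt_mult)
  moreover have "0 < sqrt ((s\<^sup>2 + a\<^sup>2) * (s\<^sup>2 + b\<^sup>2))" using assms by (simp add: add_pos_nonneg)
  ultimately show ?thesis unfolding ell_integrand_def using assms by (simp add: field_simps)
qed

lemma ell_partial_inversion:
  assumes "0 < a" "0 < b" "0 < s"
  shows "ell_partial a b (a * b / s) + ell_partial a b s = 2 * ell_partial a b (sqrt (a * b))"
proof -
  define h where "h t = ell_partial a b (a * b / t) + ell_partial a b t" for t
  have "h s = h (sqrt (a * b))"
  proof (rule DERIV_zero_imp_eq[where f = h])
    fix t assume "min s (sqrt (a * b)) \<le> t"
    moreover have "0 < min s (sqrt (a * b))" using assms by simp
    ultimately have "0 < t" by linarith
    have "0 < a * b / t" using assms \<open>0 < t\<close> by simp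
    then have "-1 < a * b / t" by linarith
    have "((\<lambda>t. a * b / t) has_real_derivative - (a * b / t\<^sup>2)) (at t)"
      using DERIV_divide[OF DERIV_const[of "a * b"] DERIV_ident, of t] \<open>0 < t\<close>
      by (simp add: power2_eq_square)
    then have "(h has_real_derivative
        ell_integrand a b (a * b / t) * - (a * b / t\<^sup>2) + ell_integrand a b t) (at t)"
      unfolding h_def[abs_def] using assms \<open>0 < t\<close> \<open>-1 < a * b / t\<close>
      by (intro DERIV_add DERIV_chain2[OF has_real_derivative_ell_partial] has_real_derivative_ell_partial)
        auto
    then show "(h has_real_derivative 0) (at t)"
      using ell_integrand_inversion[OF assms(1,2) \<open>0 < t\<close>] by simp
  qed
  moreover have "a * b / sqrt (a * b) = sqrt (a * b)" using assms by (simp add: real_div_sqrt)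
  ultimately show ?thesis by (simp add: h_def)
qed

lemma ell_complete_eq_double:
  assumes "0 < a" "0 < b"
  shows "ell_complete a b = 2 * ell_partial a b (sqrt (a * b))"
proof -
  have "((\<lambda>s. a * b / s) \<longlongrightarrow> 0) at_top"
    by (intro tendsto_divide_0[OF tendsto_const] filterlim_at_top_imp_at_infinity filterlim_ident)
  moreover have "isCont (ell_partial a b) 0"
    using has_real_derivative_ell_partial[OF assms, of 0] by (simp add: DERIV_isCont)
  ultimately have "((\<lambda>s. ell_partial a b (a * b / s)) \<longlongrightarrow> ell_partial a b 0) at_top"
    by (rule isCont_tendsto_compose[rotated])
  from tendsto_add[OF this ell_partial_tendsto_complete[OF assms]]
  have sum: "((\<lambda>s. ell_partial a b (a * b / s) + ell_partial a b s) \<longlongrightarrow> ell_complete a b) at_top"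
    by simp
  have "\<forall>\<^sub>F s in at_top.
      2 * ell_partial a b (sqrt (a * b)) = ell_partial a b (a * b / s) + ell_partial a b s"
    using eventually_gt_at_top[of 0] by eventually_elim (use assms ell_partial_inversion in auto)
  then have "((\<lambda>s. ell_partial a b (a * b / s) + ell_partial a b s)
      \<longlongrightarrow> 2 * ell_partial a b (sqrt (a * b))) at_top"
    by (rule Lim_transform_eventually[OF tendsto_const])
  with sum show ?thesis by (rule tendsto_unique[OF trivial_limit_at_top_linorder])
qed

lemma ell_integrand_landen:
  assumes "0 < a" "0 < b" "0 < s"
  shows "ell_integrand ((a + b) / 2) (sqrt (a * b)) ((s - a * b / s) / 2) * ((1 + a * b / s\<^sup>2) / 2)
    = 2 * ell_integrand a b s"
proof -
  define k where "k = (s\<^sup>2 + a * b) / (4 * s\<^sup>2)"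
  define P where "P = (s\<^sup>2 + a\<^sup>2) * (s\<^sup>2 + b\<^sup>2)"
  have "0 < k" "0 < P" using assms by (simp_all add: k_def P_def add_pos_pos add_pos_nonneg)
  have "(((s - a * b / s) / 2)\<^sup>2 + ((a + b) / 2)\<^sup>2) * (((s - a * b / s) / 2)\<^sup>2 + (sqrt (a * b))\<^sup>2)
      = k\<^sup>2 * P"
    using assms by (simp add: k_def P_def field_simps power2_eq_square)
  then have "sqrt ((((s - a * b / s) / 2)\<^sup>2 + ((a + b) / 2)\<^sup>2)
      * (((s - a * b / s) / 2)\<^sup>2 + (sqrt (a * b))\<^sup>2)) = k * sqrt P"
    using \<open>0 < k\<close> by (simp add: real_sqrt_mult)
  moreover have "(1 + a * b / s\<^sup>2) / 2 = 2 * k"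
    using assms by (simp add: k_def field_simps power2_eq_square)
  ultimately show ?thesis
    unfolding ell_integrand_def P_def[symmetric] using \<open>0 < k\<close> \<open>0 < P\<close> by simp
qed

lemma ell_partial_landen:
  assumes "0 < a" "0 < b" "sqrt (a * b) \<le> s"
  shows "ell_partial ((a + b) / 2) (sqrt (a * b)) ((s - a * b / s) / 2)
    = 2 * (ell_partial a b s - ell_partial a b (sqrt (a * b)))"
proof -
  let ?r = "sqrt (a * b)"
  have "0 < ?r" using assms by simp
  define h where "h t = ell_partial ((a + b) / 2) ?r ((t - a * b / t) / 2) - 2 * ell_partial a b t"
    for t
  have "h s = h ?r"
  proof (rule DERIV_zero_imp_eq[where f = h])
    fix t assume "min s ?r \<le> t"
    then have "?r \<le> t" using assms by simp
    then have "0 < t" using \<open>0 < ?r\<close> by linarith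
    have "a * b \<le> t * t" using mult_mono[OF \<open>?r \<le> t\<close> \<open>?r \<le> t\<close>] \<open>0 < ?r\<close> \<open>0 < t\<close> assms by simp
    then have "-1 < (t - a * b / t) / 2" using \<open>0 < t\<close> by (simp add: field_simps)
    have "((\<lambda>t. (t - a * b / t) / 2) has_real_derivative (1 + a * b / t\<^sup>2) / 2) (at t)"
      using \<open>0 < t\<close> by (auto intro!: derivative_eq_intros simp: field_simps power2_eq_square)
    then have "(h has_real_derivative ell_integrand ((a + b) / 2) ?r ((t - a * b / t) / 2)
        * ((1 + a * b / t\<^sup>2) / 2) - 2 * ell_integrand a b t) (at t)"
      unfolding h_def[abs_def] using assms \<open>0 < ?r\<close> \<open>0 < t\<close> \<open>-1 < (t - a * b / t) / 2\<close>
      by (intro DERIV_diff DERIV_chain2[OF has_real_derivative_ell_partial] DERIV_cmult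
          has_real_derivative_ell_partial) auto
    then show "(h has_real_derivative 0) (at t)"
      using ell_integrand_landen[OF assms(1,2) \<open>0 < t\<close>] by simp
  qed
  moreover have "a * b / ?r = ?r" using assms by (simp add: real_div_sqrt)
  ultimately show ?thesis by (simp add: h_def)
qed

lemma ell_complete_landen:
  assumes "0 < a" "0 < b"
  shows "ell_complete ((a + b) / 2) (sqrt (a * b)) = ell_complete a b"
proof -
  let ?m = "(a + b) / 2" and ?r = "sqrt (a * b)"
  have "filterlim (\<lambda>s. (s - a * b / s) / 2) at_top at_top" by real_asymp
  then have lim: "((\<lambda>s. ell_partial ?m ?r ((s - a * b / s) / 2)) \<longlongrightarrow> ell_complete ?m ?r) at_top"
    using assms by (intro filterlim_compose[OF ell_partial_tendsto_complete]) auto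
  have "\<forall>\<^sub>F s in at_top.
      2 * (ell_partial a b s - ell_partial a b ?r) = ell_partial ?m ?r ((s - a * b / s) / 2)"
    using eventually_ge_at_top[of ?r] by eventually_elim (use assms ell_partial_landen in auto)
  then have "((\<lambda>s. ell_partial ?m ?r ((s - a * b / s) / 2))
      \<longlongrightarrow> 2 * (ell_complete a b - ell_partial a b ?r)) at_top"
    by (rule Lim_transform_eventually[rotated]) (intro tendsto_intros ell_partial_tendsto_complete assms)
  with lim have "ell_complete ?m ?r = 2 * (ell_complete a b - ell_partial a b ?r)"
    by (rule tendsto_unique[OF trivial_limit_at_top_linorder])
  then show ?thesis using ell_complete_eq_double[OF assms] by simp
qed

lemma ell_complete_AGM:
  assumes "0 < b" "b \<le> a"
  shows "ell_complete a b = pi / (2 * AGM a b)"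
proof -
  define P Q where "P n = fst (agm_seq a b n)" and "Q n = snd (agm_seq a b n)" for n
  have bounds: "b \<le> Q n" "Q n \<le> P n" for n
    using agm_seq_bounds[of b a n] assms by (auto simp: P_def Q_def)
  then have pos: "0 < Q n" "0 < P n" for n using assms(1) by (meson less_le_trans)+
  have invariant: "ell_complete (P n) (Q n) = ell_complete a b" for n
  proof (induction n)
    case (Suc n)
    have step: "P (Suc n) = (P n + Q n) / 2" "Q (Suc n) = sqrt (P n * Q n)"
      by (cases "agm_seq a b n"; simp add: P_def Q_def Let_def)+
    show ?case by (simp only: step ell_complete_landen[OF pos(2) pos(1)] Suc.IH)
  qed (simp add: P_def Q_def)
  have upper: "ell_complete a b \<le> pi / (2 * Q n)" for n
    using ell_complete_antimono[of "Q n" "Q n" "P n" "Q n"] ell_complete_diag[of "Q n"]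
      invariant[of n] pos[of n] bounds[of n] by simp
  have lower: "pi / (2 * P n) \<le> ell_complete a b" for n
    using ell_complete_antimono[of "P n" "Q n" "P n" "P n"] ell_complete_diag[of "P n"]
      invariant[of n] pos[of n] bounds[of n] by simp
  have "0 < AGM a b" using agm_seq_tendsto_AGM(3)[of b a] assms by simp
  then have "(\<lambda>n. pi / (2 * Q n)) \<longlonglongrightarrow> pi / (2 * AGM a b)"
    "(\<lambda>n. pi / (2 * P n)) \<longlonglongrightarrow> pi / (2 * AGM a b)"
    using agm_seq_tendsto_AGM(1,2)[of b a] assms unfolding P_def Q_def
    by (auto intro!: tendsto_intros)
  with upper lower show ?thesis
    by (meson LIMSEQ_le_const LIMSEQ_le_const2 antisym)
qed

lemma L_alpha_eq_double_ell_complete: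
  assumes "0 < \<alpha>" "0 < y0" "y0 \<le> x0" "x0\<^sup>2 + y0\<^sup>2 = 1" "x0 * y0 = \<alpha>\<^sup>2"
  shows "L_alpha \<alpha> = 2 * ell_complete x0 y0"
proof -
  have "(x0 + y0)\<^sup>2 = 1 + 2 * \<alpha>\<^sup>2" using assms(4,5) by (simp add: power2_eq_square algebra_simps)
  then have "sqrt (1 + 2 * \<alpha>\<^sup>2) = x0 + y0"
    using assms(2,3) by (metis real_sqrt_unique add_nonneg_nonneg less_imp_le order_trans)
  moreover have "sqrt (x0 * y0) = \<alpha>" using assms(1,5) by simp
  ultimately have "AGM \<alpha> (sqrt (1 + 2 * \<alpha>\<^sup>2) / 2) = AGM x0 y0"
    using AGM_step[of y0 x0] assms(2,3) by simp
  then show ?thesis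
    unfolding L_alpha_def using ell_complete_AGM[OF assms(2,3)] by simp
qed

section \<open>The orbit\<close>

text \<open>Before the first zero of D, lyapunov x0 y0 (u t) - b t * y t is nondecreasing.\<close>
definition lyapunov :: "real \<Rightarrow> real \<Rightarrow> real \<Rightarrow> real" where
  "lyapunov p q v = 2 * p - 2 * p\<^sup>2 / sqrt (v\<^sup>2 + p\<^sup>2) + 2 * q * v / sqrt (v\<^sup>2 + p\<^sup>2)"

lemma lyapunov_0: "0 < p \<Longrightarrow> lyapunov p q 0 = 0"
  by (simp add: lyapunov_def power2_eq_square)

lemma lyapunov_le:
  assumes "0 < p" "0 \<le> q" "0 \<le> v"
  shows "lyapunov p q v \<le> 2 * p + 2 * q"
proof -
  define r where "r = sqrt (v\<^sup>2 + p\<^sup>2)"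
  have "0 < r" using assms by (simp add: r_def add_nonneg_pos)
  have "v \<le> r" unfolding r_def by (rule real_le_rsqrt) simp
  then have "2 * q * v / r \<le> 2 * q" using \<open>0 < r\<close> assms by (simp add: divide_le_eq mult_left_mono)
  moreover have "0 \<le> 2 * p\<^sup>2 / r" using \<open>0 < r\<close> by simp
  ultimately show ?thesis unfolding lyapunov_def r_def[symmetric] by linarith
qed

lemma lyapunov_deriv:
  assumes "0 < p"
  shows "(lyapunov p q has_real_derivative 2 * p\<^sup>2 * (v + q) / sqrt (v\<^sup>2 + p\<^sup>2) ^ 3) (at v)"
proof -
  define r where "r = sqrt (v\<^sup>2 + p\<^sup>2)"
  have "0 < v\<^sup>2 + p\<^sup>2" using assms by (simp add: add_nonneg_pos)
  then have "0 < r" "r\<^sup>2 = v\<^sup>2 + p\<^sup>2" by (simp_all add: r_def)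
  have "((\<lambda>v. sqrt (v\<^sup>2 + p\<^sup>2)) has_real_derivative v / r) (at v)"
    using \<open>0 < v\<^sup>2 + p\<^sup>2\<close> \<open>0 < r\<close> unfolding r_def
    by (auto intro!: derivative_eq_intros simp: field_simps)
  then have "(lyapunov p q has_real_derivative
      0 - (0 * r - 2 * p\<^sup>2 * (v / r)) / (r * r) + (2 * q * r - 2 * q * v * (v / r)) / (r * r)) (at v)"
    unfolding lyapunov_def[abs_def] using \<open>0 < r\<close> unfolding r_def
    by (intro DERIV_add DERIV_diff DERIV_const DERIV_divide DERIV_cmult DERIV_ident) auto
  moreover have "0 - (0 * r - 2 * p\<^sup>2 * (v / r)) / (r * r) + (2 * q * r - 2 * q * v * (v / r)) / (r * r)
      = 2 * p\<^sup>2 * (v + q) / r ^ 3"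
  proof -
    have "0 - (0 * r - 2 * p\<^sup>2 * (v / r)) / (r * r) + (2 * q * r - 2 * q * v * (v / r)) / (r * r)
        = (2 * p\<^sup>2 * v + 2 * q * (r\<^sup>2 - v\<^sup>2)) / r ^ 3"
      using \<open>0 < r\<close> by (simp add: field_simps power2_eq_square power3_eq_cube)
    then show ?thesis using \<open>r\<^sup>2 = v\<^sup>2 + p\<^sup>2\<close> by (simp add: algebra_simps)
  qed
  ultimately show ?thesis by (simp add: r_def)
qed

locale ode_orbit =
  fixes x0 y0 :: real and x y z a b :: "real \<Rightarrow> real"
  assumes y0_pos: "0 < y0" and y0_less_x0: "y0 < x0" and unit_circle: "x0\<^sup>2 + y0\<^sup>2 = 1"
    and solution: "ode_solution x0 y0 x y z a b"
begin

lemma x0_pos: "0 < x0"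
  using y0_pos y0_less_x0 by linarith

lemma y0_sq_less_x0_sq: "y0\<^sup>2 < x0\<^sup>2"
  using y0_pos y0_less_x0 by (simp add: power_strict_mono)

lemma initial_values: "x 0 = x0" "y 0 = y0" "z 0 = 0" "b 0 = 0"
  using solution by (simp_all add: ode_solution_def)

lemma x_deriv: "(x has_real_derivative - x t * z t) (at t)"
  and y_deriv: "(y has_real_derivative y t * z t) (at t)"
  and z_deriv: "(z has_real_derivative (x t)\<^sup>2 - (y t)\<^sup>2) (at t)"
  and b_deriv: "(b has_real_derivative 2 * y t - b t * z t) (at t)"
  using solution by (simp_all add: ode_solution_def)

lemma xy_const: "x t * y t = x0 * y0"
proof -
  have "((\<lambda>t. x t * y t) has_real_derivative 0) (at s)" for s
    using DERIV_mult[OF x_deriv y_deriv, of s] by (simp add: algebra_simps)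
  then have "x t * y t = x 0 * y 0" using DERIV_isconst_all by blast
  then show ?thesis by (simp add: initial_values)
qed

lemma unit_sphere: "(x t)\<^sup>2 + (y t)\<^sup>2 + (z t)\<^sup>2 = 1"
proof -
  have "((\<lambda>t. (x t)\<^sup>2 + (y t)\<^sup>2 + (z t)\<^sup>2) has_real_derivative 0) (at s)" for s
    using DERIV_add[OF DERIV_add[OF DERIV_mult[OF x_deriv x_deriv] DERIV_mult[OF y_deriv y_deriv]]
        DERIV_mult[OF z_deriv z_deriv], of s]
    by (simp add: algebra_simps power2_eq_square)
  then have "(x t)\<^sup>2 + (y t)\<^sup>2 + (z t)\<^sup>2 = (x 0)\<^sup>2 + (y 0)\<^sup>2 + (z 0)\<^sup>2" using DERIV_isconst_all by blast
  then show ?thesis by (simp add: initial_values unit_circle)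
qed

lemma x_pos: "0 < x t"
proof (rule ccontr)
  assume "\<not> 0 < x t"
  moreover have "0 < x 0" by (simp add: initial_values x0_pos)
  moreover have "\<And>s. isCont x s" using x_deriv by (rule DERIV_isCont)
  ultimately obtain s where "x s = 0"
    using IVT[of x t 0 0] IVT2[of x t 0 0] by (cases "0 \<le> t") auto
  then show False using xy_const[of s] x0_pos y0_pos by simp
qed

definition D :: "real \<Rightarrow> real" where
  "D t = x t * x0 - y t * y0"

definition u :: "real \<Rightarrow> real" where
  "u t = x0 * y0 * z t / D t"

definition w :: "real \<Rightarrow> real" where
  "w t = x0 * y0 * (x0\<^sup>2 - y0\<^sup>2) / D t"

lemma isCont_D: "isCont D t"
  unfolding D_def[abs_def] using x_deriv y_deriv by (intro continuous_intros DERIV_isCont)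

lemma D_0: "0 < D 0"
  using y0_sq_less_x0_sq by (simp add: D_def initial_values power2_eq_square)

lemma u_0: "u 0 = 0"
  by (simp add: u_def initial_values)

lemma u_deriv:
  assumes "D t \<noteq> 0"
  shows "(u has_real_derivative w t) (at t)"
proof -
  have "(D has_real_derivative - x t * z t * x0 - y t * z t * y0) (at t)"
    unfolding D_def[abs_def] by (intro DERIV_diff DERIV_cmult_right x_deriv y_deriv)
  then have "(u has_real_derivative (x0 * y0 * ((x t)\<^sup>2 - (y t)\<^sup>2) * D t
      - x0 * y0 * z t * (- x t * z t * x0 - y t * z t * y0)) / (D t * D t)) (at t)"
    unfolding u_def[abs_def] by (intro DERIV_divide DERIV_cmult z_deriv assms)
  moreover have "x0 * y0 * ((x t)\<^sup>2 - (y t)\<^sup>2) * D t - x0 * y0 * z t * (- x t * z t * x0 - y t * z t * y0)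
      = x0 * y0 * (x0\<^sup>2 - y0\<^sup>2) * D t"
    using xy_const[of t] unit_sphere[of t] unit_circle unfolding D_def by algebra
  ultimately show ?thesis using assms by (simp add: w_def)
qed

lemma w_pos: "0 < D t \<Longrightarrow> 0 < w t"
  using x0_pos y0_pos y0_sq_less_x0_sq by (simp add: w_def)

lemma u_sq:
  assumes "0 < D t"
  shows "(u t)\<^sup>2 = x0 * y0 * (y t * x0 - x t * y0) / D t"
proof -
  have "(u t)\<^sup>2 = (x0 * y0 * z t)\<^sup>2 / (D t)\<^sup>2" by (simp add: u_def power_divide)
  also have "(x0 * y0 * z t)\<^sup>2 = x0 * y0 * (y t * x0 - x t * y0) * D t"
    using xy_const[of t] unit_sphere[of t] unit_circle unfolding D_def by algebra
  finally show ?thesis using assms by (simp add: power2_eq_square)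
qed

lemma u_sq_add_x0_sq:
  assumes "0 < D t"
  shows "(u t)\<^sup>2 + x0\<^sup>2 = x0 * x t * (x0\<^sup>2 - y0\<^sup>2) / D t"
proof -
  have "(u t)\<^sup>2 + x0\<^sup>2 = ((x0 * y0 * z t)\<^sup>2 + x0\<^sup>2 * (D t)\<^sup>2) / (D t)\<^sup>2"
    using assms by (simp add: u_def field_simps)
  also have "(x0 * y0 * z t)\<^sup>2 + x0\<^sup>2 * (D t)\<^sup>2 = x0 * x t * (x0\<^sup>2 - y0\<^sup>2) * D t"
    using xy_const[of t] unit_sphere[of t] unit_circle unfolding D_def by algebra
  finally show ?thesis using assms by (simp add: power2_eq_square)
qed

lemma u_sq_add_y0_sq:
  assumes "0 < D t"
  shows "(u t)\<^sup>2 + y0\<^sup>2 = y0 * y t * (x0\<^sup>2 - y0\<^sup>2) / D t"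
proof -
  have "(u t)\<^sup>2 + y0\<^sup>2 = ((x0 * y0 * z t)\<^sup>2 + y0\<^sup>2 * (D t)\<^sup>2) / (D t)\<^sup>2"
    using assms by (simp add: u_def field_simps)
  also have "(x0 * y0 * z t)\<^sup>2 + y0\<^sup>2 * (D t)\<^sup>2 = y0 * y t * (x0\<^sup>2 - y0\<^sup>2) * D t"
    using xy_const[of t] unit_sphere[of t] unit_circle unfolding D_def by algebra
  finally show ?thesis using assms by (simp add: power2_eq_square)
qed

lemma sqrt_u_sq_prod_eq_w:
  assumes "0 < D t"
  shows "sqrt (((u t)\<^sup>2 + x0\<^sup>2) * ((u t)\<^sup>2 + y0\<^sup>2)) = w t"
proof -
  have "((u t)\<^sup>2 + x0\<^sup>2) * ((u t)\<^sup>2 + y0\<^sup>2) = (x0 * y0) * (x t * y t) * (x0\<^sup>2 - y0\<^sup>2)\<^sup>2 / (D t)\<^sup>2"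
    unfolding u_sq_add_x0_sq[OF assms] u_sq_add_y0_sq[OF assms] by (simp add: power2_eq_square)
  also have "\<dots> = (w t)\<^sup>2" unfolding xy_const w_def by (simp add: power2_eq_square)
  finally show ?thesis using w_pos[OF assms] by simp
qed

lemma ell_integrand_u_times_w: "0 < D t \<Longrightarrow> ell_integrand x0 y0 (u t) * w t = 1"
  using sqrt_u_sq_prod_eq_w[of t] w_pos[of t] by (simp add: ell_integrand_def)

lemma y_sq:
  assumes "0 < D t"
  shows "(y t)\<^sup>2 = x0\<^sup>2 * ((u t)\<^sup>2 + y0\<^sup>2) / ((u t)\<^sup>2 + x0\<^sup>2)"
proof -
  define k where "k = x0\<^sup>2 - y0\<^sup>2"
  have "0 < k" using y0_sq_less_x0_sq by (simp add: k_def)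
  have "x0\<^sup>2 * ((u t)\<^sup>2 + y0\<^sup>2) / ((u t)\<^sup>2 + x0\<^sup>2) = x0\<^sup>2 * (y0 * y t * k / D t) / (x0 * x t * k / D t)"
    unfolding u_sq_add_x0_sq[OF assms] u_sq_add_y0_sq[OF assms] k_def ..
  also have "\<dots> = x0 * y0 * y t / x t"
    using assms x_pos[of t] x0_pos \<open>0 < k\<close> by (simp add: field_simps power2_eq_square)
  also have "\<dots> = (y t)\<^sup>2" unfolding xy_const[of t, symmetric] using x_pos[of t] by (simp add: power2_eq_square)
  finally show ?thesis by simp
qed

lemma y_sq_le_lyapunov_rate:
  assumes "0 < D t" "0 \<le> u t"
  shows "2 * (y t)\<^sup>2 \<le> 2 * x0\<^sup>2 * (u t + y0) / sqrt ((u t)\<^sup>2 + x0\<^sup>2) ^ 3 * w t"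
proof -
  define q r where "q = sqrt ((u t)\<^sup>2 + x0\<^sup>2)" and "r = sqrt ((u t)\<^sup>2 + y0\<^sup>2)"
  have "0 < (u t)\<^sup>2 + x0\<^sup>2" "0 < (u t)\<^sup>2 + y0\<^sup>2"
    using x0_pos y0_pos by (simp_all add: add_nonneg_pos)
  then have "0 < q" "0 < r" "q\<^sup>2 = (u t)\<^sup>2 + x0\<^sup>2" "r\<^sup>2 = (u t)\<^sup>2 + y0\<^sup>2"
    by (simp_all add: q_def r_def)
  have "w t = q * r" unfolding q_def r_def sqrt_u_sq_prod_eq_w[OF assms(1), symmetric] real_sqrt_mult ..
  have "r \<le> u t + y0"
    unfolding r_def using assms(2) y0_pos by (intro real_le_lsqrt) (auto simp: power2_eq_square algebra_simps)
  have "2 * (y t)\<^sup>2 = 2 * x0\<^sup>2 / q\<^sup>2 * (r * r)"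
    unfolding y_sq[OF assms(1)] \<open>q\<^sup>2 = _\<close>[symmetric] \<open>r\<^sup>2 = _\<close>[symmetric] by (simp add: power2_eq_square)
  also have "\<dots> \<le> 2 * x0\<^sup>2 / q\<^sup>2 * ((u t + y0) * r)"
    using \<open>r \<le> u t + y0\<close> \<open>0 < r\<close> by (intro mult_left_mono mult_right_mono) auto
  also have "\<dots> = 2 * x0\<^sup>2 * (u t + y0) / q ^ 3 * w t"
    using \<open>0 < q\<close> unfolding \<open>w t = q * r\<close> by (simp add: field_simps power2_eq_square power3_eq_cube)
  finally show ?thesis by (simp add: q_def)
qed

lemma u_nonneg:
  assumes "0 \<le> t" and D_pos: "\<And>s. 0 \<le> s \<Longrightarrow> s \<le> t \<Longrightarrow> 0 < D s"
  shows "0 \<le> u t"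
proof -
  have "u 0 \<le> u t"
  proof (rule DERIV_nonneg_imp_nondecreasing[OF \<open>0 \<le> t\<close>])
    fix s assume "0 \<le> s" "s \<le> t"
    then have "0 < D s" by (rule D_pos)
    then show "\<exists>y. (u has_real_derivative y) (at s) \<and> 0 \<le> y"
      using u_deriv[of s] w_pos[of s] by (intro exI[of _ "w s"]) auto
  qed
  then show ?thesis by (simp add: u_0)
qed

lemma ell_partial_u:
  assumes "0 \<le> t" and D_pos: "\<And>s. 0 \<le> s \<Longrightarrow> s \<le> t \<Longrightarrow> 0 < D s"
  shows "ell_partial x0 y0 (u t) = t"
proof -
  define h where "h s = ell_partial x0 y0 (u s) - s" for s
  have "h t = h 0"
  proof (rule DERIV_zero_imp_eq[where f = h])
    fix s assume "min t 0 \<le> s" "s \<le> max t 0"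
    then have "0 \<le> s" "s \<le> t" using \<open>0 \<le> t\<close> by simp_all
    then have "0 < D s" "0 \<le> u s" using D_pos by (auto intro!: u_nonneg)
    then have "(h has_real_derivative ell_integrand x0 y0 (u s) * w s - 1) (at s)"
      unfolding h_def[abs_def] using x0_pos y0_pos
      by (intro DERIV_diff DERIV_chain2[OF has_real_derivative_ell_partial] u_deriv DERIV_ident) auto
    then show "(h has_real_derivative 0) (at s)" using ell_integrand_u_times_w[OF \<open>0 < D s\<close>] by simp
  qed
  then show ?thesis by (simp add: h_def u_0)
qed

lemma b_times_y_le:
  assumes "0 \<le> t" and D_pos: "\<And>s. 0 \<le> s \<Longrightarrow> s \<le> t \<Longrightarrow> 0 < D s"
  shows "b t * y t \<le> 2 * x0 + 2 * y0"
proof -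
  let ?H' = "\<lambda>v. 2 * x0\<^sup>2 * (v + y0) / sqrt (v\<^sup>2 + x0\<^sup>2) ^ 3"
  have "b t * y t - b 0 * y 0 \<le> lyapunov x0 y0 (u t) - lyapunov x0 y0 (u 0)"
  proof (rule DERIV_le_imp_increment_le[OF \<open>0 \<le> t\<close>])
    fix s assume "0 \<le> s" "s \<le> t"
    then have "0 < D s" "0 \<le> u s" using D_pos by (auto intro!: u_nonneg)
    show "((\<lambda>s. b s * y s) has_real_derivative 2 * (y s)\<^sup>2) (at s)"
      using DERIV_mult[OF b_deriv y_deriv, of s] by (simp add: algebra_simps power2_eq_square)
    show "((\<lambda>s. lyapunov x0 y0 (u s)) has_real_derivative ?H' (u s) * w s) (at s)"
      using \<open>0 < D s\<close> by (intro DERIV_chain2[OF lyapunov_deriv[OF x0_pos]] u_deriv) simp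
    show "2 * (y s)\<^sup>2 \<le> ?H' (u s) * w s"
      using y_sq_le_lyapunov_rate[OF \<open>0 < D s\<close> \<open>0 \<le> u s\<close>] .
  qed
  moreover have "lyapunov x0 y0 (u t) \<le> 2 * x0 + 2 * y0"
    using x0_pos y0_pos u_nonneg[OF assms] by (intro lyapunov_le) auto
  ultimately show ?thesis by (simp add: initial_values u_0 lyapunov_0[OF x0_pos])
qed

lemma D_pos_imp_less_ell_complete:
  assumes "0 \<le> t" and D_pos: "\<And>s. 0 \<le> s \<Longrightarrow> s \<le> t \<Longrightarrow> 0 < D s"
  shows "t < ell_complete x0 y0"
  using ell_partial_less_complete[OF x0_pos y0_pos u_nonneg[OF assms]] ell_partial_u[OF assms] by simp

lemma first_zero_of_D:
  obtains T where "0 < T" "T \<le> ell_complete x0 y0" "D T = 0" "\<And>t. 0 \<le> t \<Longrightarrow> t < T \<Longrightarrow> 0 < D t"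
proof -
  let ?C = "ell_complete x0 y0"
  have "0 \<le> ?C" using ell_partial_less_complete[OF x0_pos y0_pos, of 0] by simp
  then have "\<not> (\<forall>s. 0 \<le> s \<and> s \<le> ?C \<longrightarrow> 0 < D s)"
    using D_pos_imp_less_ell_complete[of ?C] by auto
  then obtain c where "0 \<le> c" "c \<le> ?C" "D c \<le> 0" by (auto simp: not_less)
  obtain T where "0 < T" "T \<le> c" "D T = 0" "\<And>t. 0 \<le> t \<Longrightarrow> t < T \<Longrightarrow> 0 < D t"
    using first_zero[OF isCont_D D_0 \<open>0 \<le> c\<close> \<open>D c \<le> 0\<close>] by blast
  with \<open>c \<le> ?C\<close> show ?thesis by (intro that) auto
qed

lemma xy_at_zero_of_D:
  assumes "D T = 0"
  shows "x T = y0" "y T = x0"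
proof -
  have "x T * x0 = y T * y0" using assms by (simp add: D_def)
  then have "x0 * ((x T)\<^sup>2 - y0\<^sup>2) = 0" using xy_const[of T] by algebra
  then have "(x T)\<^sup>2 = y0\<^sup>2" using x0_pos by simp
  then show "x T = y0" using x_pos[of T] y0_pos by (simp add: power2_eq_iff)
  then show "y T = x0" using xy_const[of T] y0_pos by simp
qed

text \<open>Otherwise u stays below some U on [0, T), so by u_sq the numerator x0 y0 (y x0 - x y0)
  of u^2 stays below U^2 D, which vanishes at T; but at T the numerator is x0 y0 (x0^2 - y0^2).\<close>
lemma ell_complete_le_first_zero:
  assumes "0 < T" "D T = 0" and D_pos: "\<And>t. 0 \<le> t \<Longrightarrow> t < T \<Longrightarrow> 0 < D t"
  shows "ell_complete x0 y0 \<le> T"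
proof (rule ccontr)
  assume "\<not> ell_complete x0 y0 \<le> T"
  then have "\<forall>\<^sub>F v in at_top. T < ell_partial x0 y0 v"
    using order_tendstoD(1)[OF ell_partial_tendsto_complete[OF x0_pos y0_pos]] by simp
  then obtain N where N: "\<And>v. N \<le> v \<Longrightarrow> T < ell_partial x0 y0 v"
    unfolding eventually_at_top_linorder by blast
  define U where "U = max N 0"
  have "0 \<le> U" "T < ell_partial x0 y0 U" using N[of U] by (simp_all add: U_def)
  define E where "E t = x0 * y0 * (y t * x0 - x t * y0) - U\<^sup>2 * D t" for t
  have "E T \<le> 0"
  proof (rule isCont_le_from_left[OF _ \<open>0 < T\<close>])
    show "isCont E T"
      unfolding E_def[abs_def] using x_deriv y_deriv by (intro continuous_intros isCont_D DERIV_isCont)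
    fix t assume "0 \<le> t" "t < T"
    then have D_pos_t: "\<And>s. 0 \<le> s \<Longrightarrow> s \<le> t \<Longrightarrow> 0 < D s" using D_pos by simp
    have "u t < U"
    proof (rule ccontr)
      assume "\<not> u t < U"
      then have "ell_partial x0 y0 U \<le> ell_partial x0 y0 (u t)"
        using ell_partial_mono[OF x0_pos y0_pos \<open>0 \<le> U\<close>] by simp
      then show False
        using ell_partial_u[OF \<open>0 \<le> t\<close> D_pos_t] \<open>t < T\<close> \<open>T < ell_partial x0 y0 U\<close> by simp
    qed
    then have "(u t)\<^sup>2 < U\<^sup>2" using u_nonneg[OF \<open>0 \<le> t\<close> D_pos_t] by (simp add: power_strict_mono)
    then show "E t \<le> 0"
      using u_sq[OF D_pos[OF \<open>0 \<le> t\<close> \<open>t < T\<close>]] D_pos[OF \<open>0 \<le> t\<close> \<open>t < T\<close>]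
      by (simp add: E_def divide_less_eq)
  qed
  moreover have "E T = x0 * y0 * (x0\<^sup>2 - y0\<^sup>2)"
    using xy_at_zero_of_D[OF \<open>D T = 0\<close>] \<open>D T = 0\<close> by (simp add: E_def power2_eq_square)
  moreover have "0 < x0 * y0 * (x0\<^sup>2 - y0\<^sup>2)" using x0_pos y0_pos y0_sq_less_x0_sq by simp
  ultimately show False by linarith
qed

lemma b_ell_complete_le: "b (ell_complete x0 y0) \<le> 2 + 2 * y0 / x0"
proof -
  obtain T where T: "0 < T" "T \<le> ell_complete x0 y0" "D T = 0"
    and D_pos: "\<And>t. 0 \<le> t \<Longrightarrow> t < T \<Longrightarrow> 0 < D t"
    using first_zero_of_D by blast
  have "ell_complete x0 y0 = T" using T ell_complete_le_first_zero[OF T(1,3) D_pos] by simp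
  have "b T * y T \<le> 2 * x0 + 2 * y0"
  proof (rule isCont_le_from_left[OF _ \<open>0 < T\<close>])
    show "isCont (\<lambda>t. b t * y t) T" using b_deriv y_deriv by (intro continuous_intros DERIV_isCont)
    fix t assume "0 \<le> t" "t < T"
    then show "b t * y t \<le> 2 * x0 + 2 * y0" using D_pos by (intro b_times_y_le) auto
  qed
  then have "b T \<le> (2 * x0 + 2 * y0) / x0"
    using x0_pos xy_at_zero_of_D(2)[OF \<open>D T = 0\<close>] by (simp add: le_divide_eq)
  then show ?thesis using \<open>ell_complete x0 y0 = T\<close> x0_pos by (simp add: field_simps)
qed

lemma b_ell_complete_less: "b (ell_complete x0 y0) < 2 + 2 * pi / ell_complete x0 y0"
proof -
  let ?C = "ell_complete x0 y0"
  have "0 < ?C" using ell_partial_less_complete[OF x0_pos y0_pos, of 0] by simp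
  have "?C \<le> ell_complete y0 y0"
    using y0_pos y0_less_x0 by (intro ell_complete_antimono) auto
  also have "\<dots> = pi / (2 * y0)" by (rule ell_complete_diag[OF y0_pos])
  finally have "?C * (2 * y0) \<le> pi" using y0_pos by (simp add: pos_le_divide_eq)
  moreover have "4 * y0 * ?C = 2 * (?C * (2 * y0))" by algebra
  ultimately have "4 * y0 * ?C \<le> 2 * pi" by linarith
  then have "4 * y0 \<le> 2 * pi / ?C" using \<open>0 < ?C\<close> by (simp add: pos_le_divide_eq)
  moreover have "(1 / 2)\<^sup>2 < x0\<^sup>2" using unit_circle y0_sq_less_x0_sq by (simp add: power2_eq_square)
  from power_less_imp_less_base[OF this less_imp_le[OF x0_pos]] have "1 / 2 < x0" .
  then have "2 * y0 / x0 < 4 * y0" using y0_pos by (simp add: divide_less_eq)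
  ultimately show ?thesis using b_ell_complete_le by simp
qed

end

lemma b_half_L_alpha_less:
  assumes "0 < \<alpha>" "0 < y0" "y0 < x0" "x0\<^sup>2 + y0\<^sup>2 = 1" "x0 * y0 = \<alpha>\<^sup>2"
    and "ode_solution x0 y0 x y z a b"
  shows "b (L_alpha \<alpha> / 2) < 2 + 4 * pi / L_alpha \<alpha>"
proof -
  interpret ode_orbit x0 y0 x y z a b using assms by unfold_locales
  show ?thesis
    using L_alpha_eq_double_ell_complete[OF assms(1,2) less_imp_le[OF assms(3)] assms(4,5)]
      b_ell_complete_less by simp
qed

lemma divide_less_if_offset_less:
  fixes c k e l :: real
  assumes "0 \<le> c" "0 < k" "0 < e" "c + k / e < l"
  shows "k / l < e"
proof -
  have "k / e < l" "0 < k / e" using assms by (simp_all add: add_increasing)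
  then have "0 < l" by linarith
  have "k < l * e" using \<open>k / e < l\<close> assms(3) by (simp add: pos_divide_less_eq)
  with \<open>0 < l\<close> show ?thesis by (simp add: pos_divide_less_eq mult.commute)
qed

theorem lemma5p1:
  shows "\<forall>\<epsilon>>0. \<exists>L0>pi * sqrt 2. \<forall>L>L0. \<forall>\<alpha> x0 y0 x y z a b.
           0 < \<alpha> \<and> \<alpha> < 1 / sqrt 2 \<and> L_alpha \<alpha> = L \<and>
           x0 > y0 \<and> y0 > 0 \<and> x0\<^sup>2 + y0\<^sup>2 = 1 \<and> x0 * y0 = \<alpha>\<^sup>2 \<and>
           ode_solution x0 y0 x y z a b
           \<longrightarrow> b (L / 2) < 2 + \<epsilon>"
proof (intro allI impI)
  fix \<epsilon> :: real assume "0 < \<epsilon>"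
  let ?L0 = "pi * sqrt 2 + 4 * pi / \<epsilon>"
  have "b (L / 2) < 2 + \<epsilon>"
    if "?L0 < L" "L_alpha \<alpha> = L" "0 < \<alpha>" "y0 < x0" "0 < y0" "x0\<^sup>2 + y0\<^sup>2 = 1" "x0 * y0 = \<alpha>\<^sup>2"
      "ode_solution x0 y0 x y z a b"
    for L \<alpha> x0 y0 and x y z a b :: "real \<Rightarrow> real"
  proof -
    have "b (L / 2) < 2 + 4 * pi / L" using b_half_L_alpha_less[OF that(3,5,4,6-8)] that(2) by simp
    moreover have "4 * pi / L < \<epsilon>"
      using that(1) \<open>0 < \<epsilon>\<close> by (intro divide_less_if_offset_less[of "pi * sqrt 2"]) auto
    ultimately show ?thesis by linarith
  qed
  moreover have "pi * sqrt 2 < ?L0" using \<open>0 < \<epsilon>\<close> by simp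
  ultimately show "\<exists>L0>pi * sqrt 2. \<forall>L>L0. \<forall>\<alpha> x0 y0 x y z a b.
           0 < \<alpha> \<and> \<alpha> < 1 / sqrt 2 \<and> L_alpha \<alpha> = L \<and>
           x0 > y0 \<and> y0 > 0 \<and> x0\<^sup>2 + y0\<^sup>2 = 1 \<and> x0 * y0 = \<alpha>\<^sup>2 \<and>
           ode_solution x0 y0 x y z a b
           \<longrightarrow> b (L / 2) < 2 + \<epsilon>"
    by blast
qed

end
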